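(* Let $\bar{\mathcal F}=\{\bar a^1,\bar b^1,\bar c^1,\bar d^1\}$ be the quadrangle of $Q$ with $\bar a^1=[1,0,0,0,0,0]$, $\bar b^1=[0,0,1,0,0,0]$, $\bar c^1=[0,1,0,0,0,0]$, $\bar d^1=[0,0,0,1,0,0]$ (so $\bar a^1\perp\bar b^1\perp\bar c^1\perp\bar d^1\perp\bar a^1$). Then $$I(\bar{\mathcal F})=\{[u,1/u,v,1/v,r,s]:\ u,v\in\mathbb F_q,\ uv\neq0,\ r,s\in\mathbb F_q,\ r^2+rs+\lambda s^2=1\},$$ and $|I(\bar{\mathcal F})|=(q-1)^2(q+1)$.
   Context: Let $q=2^n$, $V=V(6,q)$, and let $Q=Q^-(5,q)$ be the quadric of $\mathrm{PG}(V)$ with equation $f(x)=0$, where $f(x_1,\dots,x_6)=x_1x_2+x_3x_4+x_5^2+x_5x_6+\lambda x_6^2$ with $\lambda\in\mathbb F_q$, $\mathrm{Tr}(\lambda)=1$ ($\mathrm{Tr}$ the absolute trace $\mathbb F_q\to\mathbb F_2$). $Q$ is a generalized quadrangle of order $(q,q^2)$ whose lines are the totally singular lines. $\perp$ denotes orthogonality w.r.t. the bilinear form $\beta(x,y)=f(x+y)-f(x)-f(y)$; two distinct points of $Q$ are collinear in $Q$ iff they are orthogonal. A quadrangle of $Q$ is a set of four distinct points $a,b,c,d$ of $Q$ with $a\perp b\perp c\perp d\perp a$, $a\not\perp c$, $b\not\perp d$. For a point $p\notin Q$, a centric cube of $Q$ with center $p$ is a set of eight points $\{x_i^a: i=1,\dots,4,\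 a=1,2\}$ of $Q\setminus p^\perp$ such that $x_i^a$ and $x_j^b$ are collinear in $Q$ iff $i\neq j$ and $a\neq b$, and such that for each $i$ the points $p,x_i^1,x_i^2$ lie on a common projective line; the pairs $\{x_i^1,x_i^2\}$ are called opposite. A face of such a cube is a set of four of its points, one from each opposite pair, whose induced collinearity graph is a $4$-cycle. For a quadrangle $\mathcal F$ of $Q$, $I(\mathcal F)$ is the set of points $p\in\mathrm{PG}(V)\setminus Q$ with $p^\perp\cap\mathcal F=\emptyset$ such that $\mathcal F$ is a face of some centric cube of $Q$ with center $p$. *)

theory Defs
  imports Main
begin

text \<open>Vectors of V(6,q) are functions nat => 'a vanishing from index 6 on;
  coordinate i (0-based) is the (i+1)-th coordinate of the paper.\<close>

definition mk6 :: "'a::zero list \<Rightarrow> nat \<Rightarrow> 'a" where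
  "mk6 xs i = (if i < 6 then xs ! i else 0)"

definition vecs6 :: "(nat \<Rightarrow> 'a::zero) set" where
  "vecs6 = {x. \<forall>i\<ge>6. x i = 0}"

definition qf :: "'a::field \<Rightarrow> (nat \<Rightarrow> 'a) \<Rightarrow> 'a" where
  "qf lam x = x 0 * x 1 + x 2 * x 3 + x 4 ^ 2 + x 4 * x 5 + lam * x 5 ^ 2"

definition bf :: "'a::field \<Rightarrow> (nat \<Rightarrow> 'a) \<Rightarrow> (nat \<Rightarrow> 'a) \<Rightarrow> 'a" where
  "bf lam x y = qf lam (\<lambda>i. x i + y i) - qf lam x - qf lam y"

definition proj :: "(nat \<Rightarrow> 'a::field) \<Rightarrow> (nat \<Rightarrow> 'a) set" where
  "proj x = {(\<lambda>i. c * x i) | c. c \<noteq> 0}"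

definition points :: "(nat \<Rightarrow> 'a::field) set set" where
  "points = {proj x | x. x \<in> vecs6 \<and> x \<noteq> (\<lambda>_. 0)}"

definition onQ :: "'a::field \<Rightarrow> (nat \<Rightarrow> 'a) set \<Rightarrow> bool" where
  "onQ lam p \<longleftrightarrow> (\<forall>x\<in>p. qf lam x = 0)"

definition perp :: "'a::field \<Rightarrow> (nat \<Rightarrow> 'a) set \<Rightarrow> (nat \<Rightarrow> 'a) set \<Rightarrow> bool" where
  "perp lam p p' \<longleftrightarrow> (\<forall>x\<in>p. \<forall>y\<in>p'. bf lam x y = 0)"

definition quadrangle :: "'a::field \<Rightarrow> (nat \<Rightarrow> 'a) set \<Rightarrow> (nat \<Rightarrow> 'a) set
    \<Rightarrow> (nat \<Rightarrow> 'a) set \<Rightarrow> (nat \<Rightarrow> 'a) set \<Rightarrow> bool" where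
  "quadrangle lam a b c d \<longleftrightarrow>
     {a, b, c, d} \<subseteq> points \<and> distinct [a, b, c, d] \<and>
     onQ lam a \<and> onQ lam b \<and> onQ lam c \<and> onQ lam d \<and>
     perp lam a b \<and> perp lam b c \<and> perp lam c d \<and> perp lam d a \<and>
     \<not> perp lam a c \<and> \<not> perp lam b d"

definition proj_collinear3 :: "(nat \<Rightarrow> 'a::field) set \<Rightarrow> (nat \<Rightarrow> 'a) set \<Rightarrow> (nat \<Rightarrow> 'a) set \<Rightarrow> bool" where
  "proj_collinear3 p1 p2 p3 \<longleftrightarrow>
     (\<exists>u w. \<forall>z\<in>{p1, p2, p3}. \<exists>y\<in>z. \<exists>\<alpha> \<beta>. y = (\<lambda>i. \<alpha> * u i + \<beta> * w i))"

text \<open>X i a stands for the point x_i^a, i in {1..4}, a in {1,2}.\<close>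
definition centric_cube :: "'a::field \<Rightarrow> (nat \<Rightarrow> 'a) set \<Rightarrow> (nat \<Rightarrow> nat \<Rightarrow> (nat \<Rightarrow> 'a) set) \<Rightarrow> bool" where
  "centric_cube lam p X \<longleftrightarrow>
     p \<in> points \<and> \<not> onQ lam p \<and>
     (\<forall>i\<in>{1..4}. \<forall>a\<in>{1,2}. X i a \<in> points \<and> onQ lam (X i a) \<and> \<not> perp lam p (X i a)) \<and>
     inj_on (\<lambda>(i, a). X i a) ({1..4} \<times> {1,2}) \<and>
     (\<forall>i\<in>{1..4}. \<forall>a\<in>{1,2}. \<forall>j\<in>{1..4}. \<forall>b\<in>{1,2}. (i, a) \<noteq> (j, b) \<longrightarrow>
        (perp lam (X i a) (X j b) \<longleftrightarrow> i \<noteq> j \<and> a \<noteq> b)) \<and>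
     (\<forall>i\<in>{1..4}. proj_collinear3 p (X i 1) (X i 2))"

text \<open>A face: one point from each opposite pair, inducing a 4-cycle of collinearity,
  i.e. the four points form a quadrangle in some order.\<close>
definition cube_face :: "'a::field \<Rightarrow> (nat \<Rightarrow> nat \<Rightarrow> (nat \<Rightarrow> 'a) set) \<Rightarrow> (nat \<Rightarrow> 'a) set set \<Rightarrow> bool" where
  "cube_face lam X F \<longleftrightarrow>
     (\<exists>\<sigma>. (\<forall>i\<in>{1..4}. \<sigma> i \<in> {1,2}) \<and> F = (\<lambda>i. X i (\<sigma> i)) ` {1..4} \<and>
          (\<exists>a b c d. F = {a, b, c, d} \<and> quadrangle lam a b c d))"

definition I_set :: "'a::field \<Rightarrow> (nat \<Rightarrow> 'a) set set \<Rightarrow> (nat \<Rightarrow> 'a) set set" where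
  "I_set lam F = {p \<in> points. \<not> onQ lam p \<and> (\<forall>a\<in>F. \<not> perp lam p a) \<and>
                     (\<exists>X. centric_cube lam p X \<and> cube_face lam X F)}"

definition abs_trace :: "nat \<Rightarrow> 'a::field \<Rightarrow> 'a" where
  "abs_trace n x = (\<Sum>i<n. x ^ (2 ^ i))"

end

theory Submission
  imports Defs "HOL-Number_Theory.Number_Theory"
begin

(* Structure of the development.
   1. Arithmetic of a finite field of order 2^n: the characteristic is 2, squaring is a
      bijection, and for Tr(lam) = 1 the polynomial t^2 + t + lam has no root.  Hence the
      conic r^2 + rs + lam s^2 = 1 has exactly q + 1 points (one for each slope r/s, plus
      the point at infinity (1,0)).
   2. Forms and projective points: the quadratic form, its polar form, and points as
      sets of nonzero multiples of a vector.
   3. General facts on centric cubes: two non-collinear vertices P, R of a face give a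
      singular point on the line through the centre and R that is orthogonal to P.
      Writing that point as a combination of the centre x and R yields the identity
      f(x) = beta(P,x) beta(x,R).
   4. Forward inclusion: applied to both non-collinear pairs of the standard face this
      gives f(x) = x1 x2 = x3 x4, which after rescaling is the claimed normal form.
   5. Backward inclusion: for a point of the claimed form an explicit cube is given.
   6. Counting: the parametrisation is injective, so |I(F)| = (q-1)^2 (q+1). *)


section \<open>Finite fields of characteristic two\<close>

lemma CHAR_eq_2_if_card_power_2:
  assumes "card (UNIV :: 'a::{field,finite} set) = 2 ^ n"
  shows "CHAR('a) = 2"
proof -
  have prime: "prime CHAR('a)"
    by (rule prime_CHAR_semidom) (simp add: finite_imp_CHAR_pos)
  have "CHAR('a) dvd 2 ^ n"
    using CHAR_dvd_CARD[where 'a='a] assms by simp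
  hence "CHAR('a) dvd 2"
    using prime prime_dvd_power by blast
  thus ?thesis
    using prime prime_nat_iff[of 2] prime_gt_1_nat[of "CHAR('a)"] by auto
qed

lemma two_eq_zero_CHAR_2: "CHAR('a::ring_1) = 2 \<Longrightarrow> (2::'a) = 0"
  by (metis of_nat_CHAR of_nat_numeral)

lemma add_self_CHAR_2: "CHAR('a::ring_1) = 2 \<Longrightarrow> x + x = (0::'a)"
  by (metis add_eq_0_iff2 uminus_CHAR_2)

lemma add_self_left_CHAR_2: "CHAR('a::ring_1) = 2 \<Longrightarrow> x + (x + y) = (y::'a)"
  by (metis add.assoc add_0 add_self_CHAR_2)

lemma square_diff_CHAR_2:
  assumes "CHAR('a::field) = 2"
  shows "(x - y :: 'a) ^ 2 = x ^ 2 - y ^ 2"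
proof -
  have "(x + y) ^ 2 = x ^ 2 + y ^ 2"
    by (rule freshmans_dream) (simp_all add: assms)
  thus ?thesis by (simp add: minus_CHAR_2[OF assms])
qed

lemma square_inj_CHAR_2:
  assumes "CHAR('a::field) = 2" and "x ^ 2 = (y::'a) ^ 2"
  shows "x = y"
  using square_diff_CHAR_2[OF assms(1), of x y] assms(2) by simp

lemma square_surj_CHAR_2:
  assumes "CHAR('a::{field,finite}) = 2"
  shows "\<exists>c. c ^ 2 = (a::'a)"
proof -
  have "inj (\<lambda>x::'a. x ^ 2)"
    by (rule injI) (rule square_inj_CHAR_2[OF assms])
  hence "surj (\<lambda>x::'a. x ^ 2)"
    using finite_UNIV_inj_surj[of "\<lambda>x::'a. x ^ 2"] by simp
  thus ?thesis by (metis surjD)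
qed

lemma power_card_eq_same:
  fixes x :: "'a::{field,finite}"
  shows "x ^ card (UNIV :: 'a set) = x"
proof (cases "x = 0")
  case True
  thus ?thesis using finite_UNIV_card_ge_0[where 'a='a] by simp
next
  case False
  define U where "U = (UNIV :: 'a set) - {0}"
  text \<open>Multiplication by \<open>x\<close> permutes the nonzero elements, so \<open>x ^ card U = 1\<close>.\<close>
  have inj: "inj_on (\<lambda>y. x * y) U" using False by (auto intro: inj_onI)
  have perm: "(\<lambda>y. x * y) ` U = U"
  proof
    show "(\<lambda>y. x * y) ` U \<subseteq> U" using False by (auto simp: U_def)
    show "U \<subseteq> (\<lambda>y. x * y) ` U"
    proof
      fix y assume "y \<in> U"
      hence "y = x * (y / x)" "y / x \<in> U" using False by (auto simp: U_def)
      thus "y \<in> (\<lambda>y. x * y) ` U" by blast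
    qed
  qed
  have "\<Prod>U = prod (\<lambda>y. x * y) U" using prod.reindex[OF inj, of id] perm by simp
  also have "\<dots> = x ^ card U * \<Prod>U" by (simp add: prod.distrib)
  finally have "x ^ card U = 1" by (simp add: U_def)
  moreover have "card (UNIV :: 'a set) = Suc (card U)"
    using finite_UNIV_card_ge_0[where 'a='a] by (simp add: U_def card_Diff_singleton)
  ultimately show ?thesis by simp
qed

text \<open>Elements \<open>t^2 + t\<close> have absolute trace zero,
  since the trace telescopes to \<open>t^(2^n) - t = 0\<close>.\<close>
lemma abs_trace_square_plus_self:
  fixes t :: "'a::{field,finite}"
  assumes card: "card (UNIV :: 'a set) = 2 ^ n"
  shows "abs_trace n (t ^ 2 + t) = 0"
proof -
  have ch: "CHAR('a) = 2" by (rule CHAR_eq_2_if_card_power_2[OF card])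
  define f where "f = (\<lambda>i::nat. t ^ (2 ^ i))"
  have "abs_trace n (t ^ 2 + t) = (\<Sum>i<n. f (Suc i) - f i)"
    unfolding abs_trace_def f_def
  proof (rule sum.cong[OF refl])
    fix i
    have "(t ^ 2 + t) ^ 2 ^ i = (t ^ 2) ^ 2 ^ i + t ^ 2 ^ i"
      by (rule freshmans_dream'[where n = i]) (simp_all add: ch)
    also have "(t ^ 2) ^ 2 ^ i = t ^ 2 ^ Suc i"
      by (simp only: power_mult[symmetric] power_Suc)
    finally show "(t ^ 2 + t) ^ 2 ^ i = t ^ 2 ^ Suc i - t ^ 2 ^ i"
      by (simp add: minus_CHAR_2[OF ch])
  qed
  also have "\<dots> = f n - f 0" by (rule sum_lessThan_telescope)
  also have "f n = t" unfolding f_def card[symmetric] by (rule power_card_eq_same)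
  finally show ?thesis by (simp add: f_def)
qed

lemma square_plus_self_plus_nonzero:
  fixes lam t :: "'a::{field,finite}"
  assumes card: "card (UNIV :: 'a set) = 2 ^ n" and tr: "abs_trace n lam = 1"
  shows "t ^ 2 + t + lam \<noteq> 0"
proof
  assume "t ^ 2 + t + lam = 0"
  hence "lam = t ^ 2 + t"
    using uminus_CHAR_2[OF CHAR_eq_2_if_card_power_2[OF card]]
    by (metis add.commute add_eq_0_iff2)
  thus False using tr abs_trace_square_plus_self[OF card] by simp
qed

definition conic :: "'a::field \<Rightarrow> ('a \<times> 'a) set" where
  "conic lam = {(r, s). r ^ 2 + r * s + lam * s ^ 2 = 1}"

lemma conic_scale: "(t * s) ^ 2 + (t * s) * s + lam * s ^ 2 = s ^ 2 * (t ^ 2 + t + (lam::'a::field))"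
  by (simp add: power2_eq_square algebra_simps)

text \<open>Away from \<open>s = 0\<close>, the points of the conic correspond bijectively to slopes \<open>r / s\<close>:
  the slope \<open>t\<close> determines \<open>s^2 = 1 / (t^2 + t + lam)\<close>, and squaring is bijective.\<close>
lemma conic_slope_bij:
  fixes lam :: "'a::{field,finite}"
  assumes card: "card (UNIV :: 'a set) = 2 ^ n" and tr: "abs_trace n lam = 1"
  shows "bij_betw (\<lambda>(r, s). r / s) (conic lam \<inter> {(r, s). s \<noteq> 0}) UNIV"
proof (rule bij_betw_imageI)
  have ch: "CHAR('a) = 2" by (rule CHAR_eq_2_if_card_power_2[OF card])
  note nz = square_plus_self_plus_nonzero[OF card tr]
  show "inj_on (\<lambda>(r, s). r / s) (conic lam \<inter> {(r, s). s \<noteq> 0})"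
  proof (rule inj_onI, clarify)
    fix r s r' s' :: 'a
    assume h: "(r, s) \<in> conic lam" "(r', s') \<in> conic lam" "s \<noteq> 0" "s' \<noteq> 0" "r / s = r' / s'"
    define t where "t = r / s"
    have r: "r = t * s" using h(3) by (simp add: t_def)
    have r': "r' = t * s'" using h(4) unfolding t_def h(5) by simp
    have "s ^ 2 * (t ^ 2 + t + lam) = s' ^ 2 * (t ^ 2 + t + lam)"
      using h(1,2) unfolding r r' by (simp add: conic_def conic_scale)
    hence "s ^ 2 = s' ^ 2" using nz by simp
    hence "s = s'" by (rule square_inj_CHAR_2[OF ch])
    thus "r = r' \<and> s = s'" using r r' by simp
  qed
  show "(\<lambda>(r, s). r / s) ` (conic lam \<inter> {(r, s). s \<noteq> 0}) = UNIV"
  proof (intro Set.set_eqI iffI)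
    fix t :: 'a
    obtain s where s: "s ^ 2 = 1 / (t ^ 2 + t + lam)"
      using square_surj_CHAR_2[OF ch] by blast
    hence "s \<noteq> 0" using nz by auto
    moreover have "(t * s) ^ 2 + (t * s) * s + lam * s ^ 2 = 1"
      unfolding conic_scale unfolding s using nz[of t] by simp
    ultimately have "(t * s, s) \<in> conic lam \<inter> {(r, s). s \<noteq> 0}" "t = (\<lambda>(r, s). r / s) (t * s, s)"
      by (simp_all add: conic_def)
    thus "t \<in> (\<lambda>(r, s). r / s) ` (conic lam \<inter> {(r, s). s \<noteq> 0})" by blast
  qed simp
qed

text \<open>The conic has \<open>q + 1\<close> points: the \<open>q\<close> slopes and the point \<open>(1, 0)\<close>.\<close>
lemma card_conic:
  fixes lam :: "'a::{field,finite}"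
  assumes card: "card (UNIV :: 'a set) = 2 ^ n" and tr: "abs_trace n lam = 1"
  shows "card (conic lam) = card (UNIV :: 'a set) + 1"
proof -
  have ch: "CHAR('a) = 2" by (rule CHAR_eq_2_if_card_power_2[OF card])
  have on_axis: "(r, 0) \<in> conic lam \<longleftrightarrow> r = 1" for r :: 'a
    using square_inj_CHAR_2[OF ch, of r 1] by (auto simp: conic_def)
  have split: "conic lam = insert (1, 0) (conic lam \<inter> {(r, s). s \<noteq> 0})"
  proof (rule Set.set_eqI)
    fix z :: "'a \<times> 'a"
    obtain r s where z: "z = (r, s)" by fastforce
    show "z \<in> conic lam \<longleftrightarrow> z \<in> insert (1, 0) (conic lam \<inter> {(r, s). s \<noteq> 0})"
      unfolding z using on_axis[of r] by (cases "s = 0") simp_all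
  qed
  have "card (conic lam \<inter> {(r, s). s \<noteq> 0}) = card (UNIV :: 'a set)"
    by (rule bij_betw_same_card[OF conic_slope_bij[OF card tr]])
  moreover have "(1, 0) \<notin> conic lam \<inter> {(r, s). s \<noteq> 0}" by simp
  ultimately show ?thesis by (subst split) simp
qed


section \<open>Vectors, forms and projective points\<close>

lemma mk6_simps [simp]:
  "mk6 [a,b,c,d,e,f] 0 = a" "mk6 [a,b,c,d,e,f] 1 = b" "mk6 [a,b,c,d,e,f] 2 = c"
  "mk6 [a,b,c,d,e,f] 3 = d" "mk6 [a,b,c,d,e,f] 4 = e" "mk6 [a,b,c,d,e,f] 5 = f"
  "mk6 [a,b,c,d,e,f] (Suc 0) = b"
  by (simp_all add: mk6_def)

lemma mk6_vecs6 [simp]: "mk6 xs \<in> vecs6"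
  by (simp add: mk6_def vecs6_def)

lemma vecs6_eqI:
  assumes "x \<in> vecs6" "y \<in> vecs6" "\<And>i. i < 6 \<Longrightarrow> x i = y i"
  shows "x = y"
proof
  fix i show "x i = y i" using assms by (cases "i < 6") (auto simp: vecs6_def)
qed

lemma mk6_nonzero: "a \<noteq> 0 \<or> b \<noteq> 0 \<or> c \<noteq> 0 \<or> d \<noteq> 0 \<Longrightarrow> mk6 [a,b,c,d,e,f] \<noteq> (\<lambda>_. 0)"
  by (metis mk6_simps(1-4))

lemma mk6_lincomb:
  fixes k :: "'a::semiring_0"
  shows "mk6 [a1 + k*a2, b1 + k*b2, c1 + k*c2, d1 + k*d2, e1 + k*e2, f1 + k*f2]
     = (\<lambda>i. mk6 [a1,b1,c1,d1,e1,f1] i + k * mk6 [a2,b2,c2,d2,e2,f2] i)"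
  by (rule vecs6_eqI) (auto simp: vecs6_def mk6_def less_Suc_eq numeral_eq_Suc)

lemma qf_mk6: "qf lam (mk6 [a,b,c,d,e,f]) = a*b + c*d + (e^2 + e*f + lam*f^2)"
  by (simp add: qf_def add.assoc)

lemma bf_eq: "bf lam x y = x 0 * y 1 + x 1 * y 0 + x 2 * y 3 + x 3 * y 2 + x 4 * y 5 + x 5 * y 4
   + 2 * x 4 * y 4 + 2 * lam * x 5 * y 5"
  by (simp add: bf_def qf_def power2_eq_square algebra_simps)

lemma bf_CHAR_2:
  "CHAR('a::field) = 2 \<Longrightarrow>
     bf (lam::'a) x y = x 0 * y 1 + x 1 * y 0 + x 2 * y 3 + x 3 * y 2 + x 4 * y 5 + x 5 * y 4"
  by (simp add: bf_eq two_eq_zero_CHAR_2)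

lemma qf_scale: "qf lam (\<lambda>i. c * x i) = c ^ 2 * qf lam x"
  by (simp add: qf_def power2_eq_square algebra_simps)

lemma bf_scale: "bf lam (\<lambda>i. c * x i) (\<lambda>i. d * y i) = c * d * bf lam x y"
  by (simp add: bf_eq algebra_simps)

lemma qf_lincomb:
  "qf lam (\<lambda>i. a * x i + b * y i) = a ^ 2 * qf lam x + a * b * bf lam x y + b ^ 2 * qf lam y"
  by (simp add: bf_def qf_def power2_eq_square algebra_simps)

lemma bf_lincomb: "bf lam f (\<lambda>i. a * x i + b * y i) = a * bf lam f x + b * bf lam f y"
  by (simp add: bf_eq algebra_simps)

lemma bf_self: "bf lam x x = 2 * qf lam x"
  by (simp add: bf_eq qf_def power2_eq_square algebra_simps)

lemma mem_proj: "y \<in> proj x \<longleftrightarrow> (\<exists>c. c \<noteq> 0 \<and> y = (\<lambda>i. c * x i))"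
  by (auto simp: proj_def)

lemma self_in_proj: "x \<in> proj x"
  unfolding mem_proj by (rule exI[of _ 1]) simp

lemma onQ_proj: "onQ lam (proj x) \<longleftrightarrow> qf lam x = 0"
proof
  show "onQ lam (proj x) \<Longrightarrow> qf lam x = 0" using self_in_proj[of x] by (simp add: onQ_def)
qed (auto simp: onQ_def mem_proj qf_scale)

lemma perp_proj: "perp lam (proj x) (proj y) \<longleftrightarrow> bf lam x y = 0"
proof
  assume "perp lam (proj x) (proj y)"
  thus "bf lam x y = 0" using self_in_proj by (auto simp: perp_def)
qed (auto simp: perp_def mem_proj bf_scale)

lemma pointsE:
  assumes "p \<in> points"
  obtains x where "x \<in> vecs6" "x \<noteq> (\<lambda>_. 0)" "p = proj x"
  using assms by (auto simp: points_def)

lemma points_nonzero: "p \<in> points \<Longrightarrow> z \<in> p \<Longrightarrow> z \<noteq> (\<lambda>_. 0)"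
  by (auto simp: points_def mem_proj fun_eq_iff) (metis mult_eq_0_iff)

lemma proj_in_points: "x \<in> vecs6 \<Longrightarrow> x \<noteq> (\<lambda>_. 0) \<Longrightarrow> proj x \<in> points"
  by (auto simp: points_def)

lemma proj_scale:
  assumes "c \<noteq> 0"
  shows "proj (\<lambda>i. c * x i) = proj x"
proof (rule Set.set_eqI)
  fix y
  have "(\<exists>d. d \<noteq> 0 \<and> y = (\<lambda>i. d * (c * x i))) \<longleftrightarrow> (\<exists>d. d \<noteq> 0 \<and> y = (\<lambda>i. d * x i))"
  proof
    assume "\<exists>d. d \<noteq> 0 \<and> y = (\<lambda>i. d * (c * x i))"
    then obtain d where "d \<noteq> 0" "y = (\<lambda>i. d * (c * x i))" by blast
    thus "\<exists>d. d \<noteq> 0 \<and> y = (\<lambda>i. d * x i)"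
      using assms by (intro exI[of _ "d * c"]) (simp add: mult.assoc)
  next
    assume "\<exists>d. d \<noteq> 0 \<and> y = (\<lambda>i. d * x i)"
    then obtain d where "d \<noteq> 0" "y = (\<lambda>i. d * x i)" by blast
    thus "\<exists>d. d \<noteq> 0 \<and> y = (\<lambda>i. d * (c * x i))"
      using assms by (intro exI[of _ "d / c"]) simp
  qed
  thus "y \<in> proj (\<lambda>i. c * x i) \<longleftrightarrow> y \<in> proj x" by (simp add: mem_proj)
qed

lemma proj_eqD:
  assumes "proj x = proj y"
  shows "\<exists>c. c \<noteq> 0 \<and> y = (\<lambda>i. c * x i)"
proof -
  have "y \<in> proj x" using self_in_proj[of y] assms by simp
  thus ?thesis by (simp add: mem_proj)
qed

lemma proj_neq: "x k = 0 \<Longrightarrow> y k \<noteq> 0 \<Longrightarrow> proj x \<noteq> proj y"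
  by (metis proj_eqD mult_zero_right)

lemma self_perp: "p \<in> points \<Longrightarrow> onQ lam p \<Longrightarrow> perp lam p p"
  by (auto elim!: pointsE simp: onQ_proj perp_proj bf_self)

lemma proj_collinear3_lincomb:
  assumes "z = (\<lambda>i. y i + k * e i)"
  shows "proj_collinear3 (proj y) (proj e) (proj z)"
proof -
  have "y = (\<lambda>i. 1 * y i + 0 * e i)" "e = (\<lambda>i. 0 * y i + 1 * e i)"
    "z = (\<lambda>i. 1 * y i + k * e i)"
    using assms by simp_all
  thus ?thesis unfolding proj_collinear3_def using self_in_proj by blast
qed

lemma proj_collinear3_swap: "proj_collinear3 p a b \<longleftrightarrow> proj_collinear3 p b a"
  by (simp add: proj_collinear3_def insert_commute)


section \<open>Centric cubes\<close>

lemma cube_vertices_inj: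
  assumes self: "\<forall>i\<in>{1..4}. \<forall>a\<in>{1,2}. perp lam (X i a) (X i a)"
   and adj: "\<forall>i\<in>{1..4::nat}. \<forall>a\<in>{1,2::nat}. \<forall>j\<in>{1..4}. \<forall>b\<in>{1,2}. (i,a) \<noteq> (j,b) \<longrightarrow>
        (perp lam (X i a) (X j b) \<longleftrightarrow> i \<noteq> j \<and> a \<noteq> b)"
  shows "inj_on (\<lambda>(i,a). X i a) ({1..4} \<times> {1,2})"
proof (rule inj_onI, clarify, rule ccontr)
  fix i a j b
  assume h: "i \<in> {1..4::nat}" "a \<in> {1,2::nat}" "j \<in> {1..4}" "b \<in> {1,2}" "X i a = X j b"
    and ne: "\<not> (i = j \<and> a = b)"
  show False
  proof (cases "i \<noteq> j \<and> a \<noteq> b")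
    case False
    text \<open>Then \<open>X i a\<close> would be non-collinear with itself.\<close>
    thus False using adj[rule_format, OF h(1-4)] self h ne by auto
  next
    case True
    text \<open>A third index \<open>k\<close> separates them: \<open>X k a\<close> sees \<open>X j b\<close> but not \<open>X i a\<close>.\<close>
    have "\<exists>k\<in>{1,2,3::nat}. k \<noteq> i \<and> k \<noteq> j" by auto
    then obtain k where "k \<in> {1,2,3::nat}" "k \<noteq> i" "k \<noteq> j" by blast
    hence k: "k \<in> {1..4::nat}" "k \<noteq> i" "k \<noteq> j" by auto
    have "\<not> perp lam (X k a) (X i a)" using adj[rule_format, OF k(1) h(2) h(1) h(2)] k(2) by auto
    moreover have "perp lam (X k a) (X j b)" using adj[rule_format, OF k(1) h(2-4)] k(3) True by auto
    ultimately show False using h by simp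
  qed
qed

text \<open>If \<open>P, R\<close> are non-collinear vertices of a face, they lie in the same layer, so the
  vertex \<open>g\<close> opposite to \<open>R\<close> is collinear with \<open>P\<close>; and \<open>g\<close> lies on the line through the
  centre and \<open>R\<close>.\<close>
lemma face_opposite_vertex:
  assumes cube: "centric_cube lam p X" and face: "cube_face lam X F"
    and P: "P \<in> F" and R: "R \<in> F" and PR: "\<not> perp lam P R"
  shows "\<exists>g. g \<in> points \<and> onQ lam g \<and> perp lam P g \<and> proj_collinear3 p R g"
proof -
  obtain \<sigma> where \<sigma>: "\<forall>i\<in>{1..4}. \<sigma> i \<in> {1,2}" and F: "F = (\<lambda>i. X i (\<sigma> i)) ` {1..4::nat}"
    using face unfolding cube_face_def by blast
  obtain i where i: "i \<in> {1..4}" "P = X i (\<sigma> i)" using P F by blast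
  obtain j where j: "j \<in> {1..4}" "R = X j (\<sigma> j)" using R F by blast
  have vert: "\<forall>i\<in>{1..4}. \<forall>a\<in>{1,2}. X i a \<in> points \<and> onQ lam (X i a)"
    and adj: "\<forall>i\<in>{1..4}. \<forall>a\<in>{1,2}. \<forall>j\<in>{1..4}. \<forall>b\<in>{1,2}. (i, a) \<noteq> (j, b) \<longrightarrow>
        (perp lam (X i a) (X j b) \<longleftrightarrow> i \<noteq> j \<and> a \<noteq> b)"
    and col: "\<forall>i\<in>{1..4}. proj_collinear3 p (X i 1) (X i 2)"
    using cube unfolding centric_cube_def by blast+
  have si: "\<sigma> i \<in> {1,2}" and sj: "\<sigma> j \<in> {1,2}" using \<sigma> i j by blast+
  have "i \<noteq> j" using PR self_perp vert i j si by metis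
  hence same_layer: "\<sigma> i = \<sigma> j" using adj[rule_format, OF i(1) si j(1) sj] PR i(2) j(2) by auto
  define b where "b = 3 - \<sigma> j"
  have b: "b \<in> {1,2}" "b \<noteq> \<sigma> j" using sj by (auto simp: b_def)
  have "perp lam P (X j b)"
    using adj[rule_format, OF i(1) si j(1) b(1)] \<open>i \<noteq> j\<close> b(2) same_layer i(2) by auto
  moreover have "proj_collinear3 p R (X j b)"
    using col j sj b by (auto simp: b_def proj_collinear3_swap)
  ultimately show ?thesis using vert j b by blast
qed

text \<open>Linear algebra on a projective line: if \<open>x\<close> (non-singular) and \<open>e\<close> (singular, nonzero)
  lie in the span of \<open>u, w\<close>, they are independent, so every vector of that span is a
  combination of \<open>x\<close> and \<open>e\<close>.\<close>
lemma span_change_basis: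
  fixes x e z u w :: "nat \<Rightarrow> 'a::field"
  assumes x: "x = (\<lambda>i. a1*u i + b1*w i)" and e: "e = (\<lambda>i. a2*u i + b2*w i)"
    and z: "z = (\<lambda>i. a3*u i + b3*w i)"
    and qx: "qf lam x \<noteq> 0" and qe: "qf lam e = 0" and e_nz: "e \<noteq> (\<lambda>_. 0)"
  shows "\<exists>\<alpha> \<beta>. z = (\<lambda>i. \<alpha> * x i + \<beta> * e i)"
proof -
  define D where "D = a1*b2 - a2*b1"
  have "D \<noteq> 0"
  proof
    assume D0: "D = 0"
    have e1: "b2 * x i = b1 * e i" and e2: "a2 * x i = a1 * e i" for i
      using D0 unfolding x e D_def by (simp_all add: algebra_simps)
    have "\<exists>c. x = (\<lambda>i. c * e i)"
    proof (cases "b2 = 0")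
      case False
      hence "x = (\<lambda>i. (b1/b2) * e i)" using e1 by (auto simp: fun_eq_iff field_simps)
      thus ?thesis by blast
    next
      case True
      hence "a2 \<noteq> 0" using e_nz unfolding e by auto
      hence "x = (\<lambda>i. (a1/a2) * e i)" using e2 by (auto simp: fun_eq_iff field_simps)
      thus ?thesis by blast
    qed
    then obtain c where "x = (\<lambda>i. c * e i)" by blast
    hence "qf lam x = c ^ 2 * qf lam e" by (simp add: qf_scale)
    thus False using qx qe by simp
  qed
  have "D * z i = (a3*b2 - b3*a2) * x i + (b3*a1 - a3*b1) * e i" for i
    unfolding x e z D_def by (simp add: algebra_simps)
  hence "z = (\<lambda>i. ((a3*b2 - b3*a2)/D) * x i + ((b3*a1 - a3*b1)/D) * e i)"
    using \<open>D \<noteq> 0\<close> by (metis (no_types, lifting) add_divide_distrib nonzero_mult_div_cancel_left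
        times_divide_eq_left)
  thus ?thesis by blast
qed

lemma collinear_representative:
  assumes col: "proj_collinear3 (proj x) (proj e) g"
    and qx: "qf lam x \<noteq> 0" and qe: "qf lam e = 0" and e_nz: "e \<noteq> (\<lambda>_. 0)"
  shows "\<exists>z \<alpha> \<beta>. z \<in> g \<and> z = (\<lambda>i. \<alpha> * x i + \<beta> * e i)"
proof -
  obtain u w where "\<forall>Z\<in>{proj x, proj e, g}. \<exists>y\<in>Z. \<exists>\<alpha> \<beta>. y = (\<lambda>i. \<alpha> * u i + \<beta> * w i)"
    using col unfolding proj_collinear3_def by blast
  hence "\<exists>y\<in>proj x. \<exists>\<alpha> \<beta>. y = (\<lambda>i. \<alpha> * u i + \<beta> * w i)"
    "\<exists>y\<in>proj e. \<exists>\<alpha> \<beta>. y = (\<lambda>i. \<alpha> * u i + \<beta> * w i)"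
    "\<exists>y\<in>g. \<exists>\<alpha> \<beta>. y = (\<lambda>i. \<alpha> * u i + \<beta> * w i)"
    by simp_all
  then obtain x' a1 b1 e' a2 b2 z a3 b3
    where x': "x' \<in> proj x" "x' = (\<lambda>i. a1 * u i + b1 * w i)"
      and e': "e' \<in> proj e" "e' = (\<lambda>i. a2 * u i + b2 * w i)"
      and z: "z \<in> g" "z = (\<lambda>i. a3 * u i + b3 * w i)"
    by blast
  obtain c where c: "c \<noteq> 0" "x' = (\<lambda>i. c * x i)" using x'(1) unfolding mem_proj by blast
  obtain d where d: "d \<noteq> 0" "e' = (\<lambda>i. d * e i)" using e'(1) unfolding mem_proj by blast
  have "qf lam x' \<noteq> 0" "qf lam e' = 0" "e' \<noteq> (\<lambda>_. 0)"
    unfolding c(2) d(2) using qx qe e_nz c(1) d(1) by (auto simp: qf_scale fun_eq_iff)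
  then obtain \<alpha> \<beta> where "z = (\<lambda>i. \<alpha> * x' i + \<beta> * e' i)"
    using span_change_basis[OF x'(2) e'(2) z(2)] by blast
  hence "z = (\<lambda>i. (\<alpha> * c) * x i + (\<beta> * d) * e i)" using c d by (simp add: mult.assoc)
  thus ?thesis using z(1) by blast
qed

lemma qf_from_singular_combination:
  assumes z: "z \<noteq> (\<lambda>_. 0)" "qf lam z = 0" "bf lam f z = 0" "z = (\<lambda>i. \<alpha> * x i + \<beta> * e i)"
    and fe: "bf lam f e = 1" and qe: "qf lam e = 0"
  shows "qf lam x = bf lam f x * bf lam x e"
proof -
  have \<beta>: "\<beta> = - \<alpha> * bf lam f x"
    using z(3) unfolding z(4) bf_lincomb fe by (simp add: eq_neg_iff_add_eq_0 add.commute)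
  have "\<alpha> \<noteq> 0" using z(1,4) \<beta> by auto
  moreover have "\<alpha> ^ 2 * (qf lam x - bf lam f x * bf lam x e) = 0"
    using z(2) unfolding z(4) qf_lincomb qe \<beta> by (simp add: algebra_simps power2_eq_square)
  ultimately show ?thesis by simp
qed

lemma qf_centre_face_pair:
  assumes cube: "centric_cube lam (proj x) X" and face: "cube_face lam X F"
    and f: "proj f \<in> F" and e: "proj e \<in> F" and fe: "bf lam f e = 1"
    and qe: "qf lam e = 0" and e_nz: "e \<noteq> (\<lambda>_. 0)"
  shows "qf lam x = bf lam f x * bf lam x e"
proof -
  have qx: "qf lam x \<noteq> 0" using cube by (simp add: centric_cube_def onQ_proj)
  obtain g where g: "g \<in> points" "onQ lam g" "perp lam (proj f) g" "proj_collinear3 (proj x) (proj e) g"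
    using face_opposite_vertex[OF cube face f e] fe by (auto simp: perp_proj)
  obtain z \<alpha> \<beta> where z: "z \<in> g" "z = (\<lambda>i. \<alpha> * x i + \<beta> * e i)"
    using collinear_representative[OF g(4) qx qe e_nz] by blast
  moreover have "z \<noteq> (\<lambda>_. 0)" "qf lam z = 0" "bf lam f z = 0"
    using points_nonzero g z(1) self_in_proj[of f] by (auto simp: onQ_def perp_def)
  ultimately show ?thesis using qf_from_singular_combination fe qe by blast
qed


section \<open>The standard quadrangle\<close>

definition std_quadrangle :: "(nat \<Rightarrow> 'a::field) set set" where
  "std_quadrangle = {proj (mk6 [1,0,0,0,0,0]), proj (mk6 [0,0,1,0,0,0]),
                     proj (mk6 [0,1,0,0,0,0]), proj (mk6 [0,0,0,1,0,0])}"

definition param_point :: "'a::field \<Rightarrow> 'a \<Rightarrow> 'a \<Rightarrow> 'a \<Rightarrow> (nat \<Rightarrow> 'a) set" where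
  "param_point u v r s = proj (mk6 [u, 1 / u, v, 1 / v, r, s])"

text \<open>The chosen representative of a \<open>param_point\<close> has \<open>f = 1 + 1 + 1 = 1\<close>.\<close>
lemma qf_param_vector:
  assumes ch: "CHAR('a::field) = 2" and uv: "u * v \<noteq> (0::'a)" and rs: "(r, s) \<in> conic lam"
  shows "qf lam (mk6 [u, 1 / u, v, 1 / v, r, s]) = 1"
proof -
  have "qf lam (mk6 [u, 1 / u, v, 1 / v, r, s]) = (1 + 1) + 1"
    using uv rs by (simp add: qf_mk6 conic_def)
  thus ?thesis by (simp only: add_self_CHAR_2[OF ch] add_0)
qed

text \<open>Normal form: a vector with \<open>f(x) = x1 x2 = x3 x4 \<noteq> 0\<close> (paper's indices) is, up to a
  scalar \<open>c\<close> with \<open>c^2 = 1 / f(x)\<close>, of the form \<open>[u, 1/u, v, 1/v, r, s]\<close> on the conic.\<close>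
lemma param_point_normal_form:
  fixes x :: "nat \<Rightarrow> 'a::{field,finite}"
  assumes ch: "CHAR('a) = 2" and x: "x \<in> vecs6" and nz: "x 0 * x 1 \<noteq> 0"
    and q01: "qf lam x = x 0 * x 1" and q23: "qf lam x = x 2 * x 3"
  shows "\<exists>u v r s. proj x = param_point u v r s \<and> u * v \<noteq> 0 \<and> (r, s) \<in> conic lam"
proof -
  have "qf lam x = x 0 * x 1 + x 2 * x 3 + (x 4 ^ 2 + x 4 * x 5 + lam * x 5 ^ 2)"
    by (simp add: qf_def add.assoc)
  also have "\<dots> = (qf lam x + qf lam x) + (x 4 ^ 2 + x 4 * x 5 + lam * x 5 ^ 2)"
    by (simp only: q01[symmetric] q23[symmetric])
  finally have N: "x 4 ^ 2 + x 4 * x 5 + lam * x 5 ^ 2 = qf lam x"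
    by (simp add: add_self_CHAR_2[OF ch])
  obtain c where c: "c ^ 2 = 1 / (x 0 * x 1)" using square_surj_CHAR_2[OF ch] by blast
  have c01: "c ^ 2 * (x 0 * x 1) = 1" using c nz by simp
  hence c23: "c ^ 2 * (x 2 * x 3) = 1" by (simp only: q01[symmetric] q23[symmetric])
  have nz': "c \<noteq> 0" "x 0 \<noteq> 0" "x 2 \<noteq> 0" using c01 c23 by auto
  have "(\<lambda>i. c * x i) = mk6 [c * x 0, 1 / (c * x 0), c * x 2, 1 / (c * x 2), c * x 4, c * x 5]"
  proof (rule vecs6_eqI)
    show "(\<lambda>i. c * x i) \<in> vecs6" using x by (simp add: vecs6_def)
  next
    fix i :: nat assume "i < 6"
    hence "i = 0 \<or> i = 1 \<or> i = 2 \<or> i = 3 \<or> i = 4 \<or> i = 5" by auto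
    thus "c * x i = mk6 [c * x 0, 1 / (c * x 0), c * x 2, 1 / (c * x 2), c * x 4, c * x 5] i"
      using c01 c23 nz' by (auto simp: field_simps power2_eq_square)
  qed simp
  hence "proj x = param_point (c * x 0) (c * x 2) (c * x 4) (c * x 5)"
    unfolding param_point_def using proj_scale[OF nz'(1), of x] by simp
  moreover have "(c * x 4) ^ 2 + (c * x 4) * (c * x 5) + lam * (c * x 5) ^ 2
      = c ^ 2 * (x 4 ^ 2 + x 4 * x 5 + lam * x 5 ^ 2)"
    by (simp add: power2_eq_square algebra_simps)
  hence "(c * x 4, c * x 5) \<in> conic lam"
    unfolding conic_def N q01 using c01 by simp
  moreover have "c * x 0 * (c * x 2) \<noteq> 0" using nz' by simp
  ultimately show ?thesis by blast
qed

lemma I_set_std_quadrangle_subset: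
  fixes lam :: "'a::{field,finite}"
  assumes ch: "CHAR('a) = 2" and p: "p \<in> I_set lam std_quadrangle"
  shows "\<exists>u v r s. p = param_point u v r s \<and> u * v \<noteq> 0 \<and> (r, s) \<in> conic lam"
proof -
  obtain X where cube: "centric_cube lam p X" and face: "cube_face lam X std_quadrangle"
    and np: "\<forall>a\<in>std_quadrangle. \<not> perp lam p a" and pp: "p \<in> points"
    using p unfolding I_set_def by blast
  obtain x where x: "x \<in> vecs6" "p = proj x" using pp by (rule pointsE)
  have nz: "x 0 * x 1 \<noteq> 0"
    using np unfolding std_quadrangle_def x(2) by (auto simp: perp_proj bf_CHAR_2[OF ch])
  have "qf lam x = x 1 * x 0"
    using qf_centre_face_pair[OF cube[unfolded x(2)] face, of "mk6 [1,0,0,0,0,0]" "mk6 [0,1,0,0,0,0]"]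
    by (simp add: std_quadrangle_def bf_CHAR_2[OF ch] qf_mk6 mk6_nonzero)
  moreover have "qf lam x = x 3 * x 2"
    using qf_centre_face_pair[OF cube[unfolded x(2)] face, of "mk6 [0,0,1,0,0,0]" "mk6 [0,0,0,1,0,0]"]
    by (simp add: std_quadrangle_def bf_CHAR_2[OF ch] qf_mk6 mk6_nonzero)
  ultimately show ?thesis
    using param_point_normal_form[OF ch x(1) nz] x(2) by (simp add: mult.commute)
qed

text \<open>The explicit cube with centre \<open>[y]\<close>, \<open>y = [u, 1/u, v, 1/v, r, s]\<close>: each opposite pair
  consists of a point \<open>[e_k]\<close> of the standard quadrangle and the point \<open>[y - y_k e_k]\<close>
  (the k-th coordinate of \<open>y\<close> killed), both on the line through \<open>[y]\<close> and \<open>[e_k]\<close>.\<close>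
definition std_cube :: "'a::field \<Rightarrow> 'a \<Rightarrow> 'a \<Rightarrow> 'a \<Rightarrow> nat \<Rightarrow> nat \<Rightarrow> (nat \<Rightarrow> 'a) set" where
  "std_cube u v r s i a = proj
     (if i = 1 then (if a = 1 then mk6 [1,0,0,0,0,0] else mk6 [0, 1/u, v, 1/v, r, s])
      else if i = 2 then (if a = 1 then mk6 [0,1,0,0,0,0] else mk6 [u, 0, v, 1/v, r, s])
      else if i = 3 then (if a = 1 then mk6 [u, 1/u, 0, 1/v, r, s] else mk6 [0,0,1,0,0,0])
      else (if a = 1 then mk6 [u, 1/u, v, 0, r, s] else mk6 [0,0,0,1,0,0]))"

lemma ball_1_4: "(\<forall>i\<in>{1..4::nat}. P i) \<longleftrightarrow> P 1 \<and> P 2 \<and> P 3 \<and> P 4"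
  by (auto simp: atLeastAtMost_iff le_Suc_eq numeral_eq_Suc)

lemma std_cube_vertices:
  assumes ch: "CHAR('a::field) = 2" and uv: "u * v \<noteq> (0::'a)" and rs: "(r, s) \<in> conic lam"
  shows "\<forall>i\<in>{1..4}. \<forall>a\<in>{1,2}. std_cube u v r s i a \<in> points \<and> onQ lam (std_cube u v r s i a)
           \<and> \<not> perp lam (param_point u v r s) (std_cube u v r s i a)"
  using uv rs two_eq_zero_CHAR_2[OF ch]
  unfolding ball_1_4 std_cube_def param_point_def onQ_proj perp_proj
  by (auto intro!: proj_in_points mk6_nonzero simp: qf_mk6 conic_def bf_CHAR_2[OF ch])

lemma std_cube_adjacency:
  assumes ch: "CHAR('a::field) = 2" and uv: "u * v \<noteq> (0::'a)"
  shows "\<forall>i\<in>{1..4}. \<forall>a\<in>{1,2}. \<forall>j\<in>{1..4}. \<forall>b\<in>{1,2}. (i, a) \<noteq> (j, b) \<longrightarrow>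
           (perp lam (std_cube u v r s i a) (std_cube u v r s j b) \<longleftrightarrow> i \<noteq> j \<and> a \<noteq> b)"
  using uv unfolding ball_1_4 std_cube_def perp_proj
  by (simp add: bf_CHAR_2[OF ch] add_self_CHAR_2[OF ch] add_self_left_CHAR_2[OF ch] add_ac mult_ac)

text \<open>Opposite vertices are collinear with the centre, since \<open>[y - y_k e_k]\<close> lies on the
  line through \<open>[y]\<close> and \<open>[e_k]\<close>.\<close>
lemma std_cube_opposite_collinear:
  "\<forall>i\<in>{1..4}. proj_collinear3 (param_point u v r s) (std_cube u v r s i 1) (std_cube u v r s i 2)"
proof -
  let ?y = "mk6 [u, 1/u, v, 1/v, r, s :: 'a::field]"
  have "proj_collinear3 (proj ?y) (proj (mk6 [1,0,0,0,0,0])) (proj (mk6 [0, 1/u, v, 1/v, r, s]))"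
    by (rule proj_collinear3_lincomb[where k = "-u"]) (subst mk6_lincomb[symmetric], simp)
  moreover have "proj_collinear3 (proj ?y) (proj (mk6 [0,1,0,0,0,0])) (proj (mk6 [u, 0, v, 1/v, r, s]))"
    by (rule proj_collinear3_lincomb[where k = "-(1/u)"]) (subst mk6_lincomb[symmetric], simp)
  moreover have "proj_collinear3 (proj ?y) (proj (mk6 [0,0,1,0,0,0])) (proj (mk6 [u, 1/u, 0, 1/v, r, s]))"
    by (rule proj_collinear3_lincomb[where k = "-v"]) (subst mk6_lincomb[symmetric], simp)
  moreover have "proj_collinear3 (proj ?y) (proj (mk6 [0,0,0,1,0,0])) (proj (mk6 [u, 1/u, v, 0, r, s]))"
    by (rule proj_collinear3_lincomb[where k = "-(1/v)"]) (subst mk6_lincomb[symmetric], simp)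
  ultimately show ?thesis
    unfolding ball_1_4 std_cube_def param_point_def by (simp add: proj_collinear3_swap)
qed

lemma std_cube_centric:
  assumes ch: "CHAR('a::field) = 2" and uv: "u * v \<noteq> (0::'a)" and rs: "(r, s) \<in> conic lam"
  shows "centric_cube lam (param_point u v r s) (std_cube u v r s)"
proof -
  note vert = std_cube_vertices[OF ch uv rs] and adj = std_cube_adjacency[OF ch uv]
  have "param_point u v r s \<in> points"
    using uv unfolding param_point_def by (auto intro!: proj_in_points mk6_nonzero)
  moreover have "\<not> onQ lam (param_point u v r s)"
    unfolding param_point_def onQ_proj qf_param_vector[OF ch uv rs] by simp
  moreover have "inj_on (\<lambda>(i, a). std_cube u v r s i a) ({1..4} \<times> {1,2})"
    by (rule cube_vertices_inj[OF _ adj]) (use vert self_perp in blast)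
  ultimately show ?thesis
    unfolding centric_cube_def using vert adj std_cube_opposite_collinear[of u v r s]
    by (intro conjI) simp_all
qed

lemma std_cube_face:
  assumes ch: "CHAR('a::field) = 2"
  shows "cube_face lam (std_cube u v r s) (std_quadrangle :: (nat \<Rightarrow> 'a) set set)"
proof -
  let ?e0 = "mk6 [1,0,0,0,0,0::'a]" and ?e1 = "mk6 [0,1,0,0,0,0::'a]"
  let ?e2 = "mk6 [0,0,1,0,0,0::'a]" and ?e3 = "mk6 [0,0,0,1,0,0::'a]"
  define \<sigma> where "\<sigma> = (\<lambda>i::nat. if i \<le> 2 then 1 else (2::nat))"
  have img: "(\<lambda>i. std_cube u v r s i (\<sigma> i)) ` {1..4} = {proj ?e0, proj ?e2, proj ?e1, proj ?e3}"
    unfolding \<sigma>_def std_cube_def by (auto simp: atLeastAtMost_iff le_Suc_eq numeral_eq_Suc)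
  have "distinct [proj ?e0, proj ?e2, proj ?e1, proj ?e3]"
    using proj_neq[of ?e0 2 ?e2] proj_neq[of ?e0 1 ?e1] proj_neq[of ?e0 3 ?e3]
      proj_neq[of ?e2 1 ?e1] proj_neq[of ?e2 3 ?e3] proj_neq[of ?e1 3 ?e3]
    by auto
  hence "quadrangle lam (proj ?e0) (proj ?e2) (proj ?e1) (proj ?e3)"
    unfolding quadrangle_def
    by (simp add: onQ_proj perp_proj qf_mk6 bf_CHAR_2[OF ch] proj_in_points mk6_nonzero)
  thus ?thesis
    unfolding cube_face_def std_quadrangle_def using img by (intro exI[of _ \<sigma>]) (auto simp: \<sigma>_def)
qed

lemma param_point_in_I_set:
  assumes ch: "CHAR('a::field) = 2" and uv: "u * v \<noteq> (0::'a)" and rs: "(r, s) \<in> conic lam"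
  shows "param_point u v r s \<in> I_set lam std_quadrangle"
proof -
  have cube: "centric_cube lam (param_point u v r s) (std_cube u v r s)"
    by (rule std_cube_centric[OF ch uv rs])
  hence "param_point u v r s \<in> points" "\<not> onQ lam (param_point u v r s)"
    by (simp_all add: centric_cube_def)
  moreover have "\<forall>a\<in>std_quadrangle. \<not> perp lam (param_point u v r s) a"
    using uv unfolding std_quadrangle_def param_point_def by (simp add: perp_proj bf_CHAR_2[OF ch])
  ultimately show ?thesis
    unfolding I_set_def using cube std_cube_face[OF ch] by blast
qed


section \<open>Counting\<close>

text \<open>Distinct parameters give distinct points: the representatives \<open>[u, 1/u, v, 1/v, r, s]\<close>
  both have \<open>f = 1\<close>, so the scalar relating them squares to 1, hence is 1.\<close>
lemma param_point_eqD:
  assumes ch: "CHAR('a::field) = 2"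
    and h: "u * v \<noteq> 0" "(r, s) \<in> conic lam" "u' * v' \<noteq> 0" "(r', s') \<in> conic (lam::'a)"
    and eq: "param_point u v r s = param_point u' v' r' s'"
  shows "u = u' \<and> v = v' \<and> r = r' \<and> s = s'"
proof -
  let ?y = "mk6 [u, 1 / u, v, 1 / v, r, s]" and ?y' = "mk6 [u', 1 / u', v', 1 / v', r', s']"
  obtain c where c: "c \<noteq> 0" "?y' = (\<lambda>i. c * ?y i)"
    using proj_eqD eq unfolding param_point_def by blast
  have "qf lam ?y = 1" "qf lam ?y' = 1"
    using qf_param_vector[OF ch] h by simp_all
  hence "c ^ 2 = 1 ^ 2" using c(2) qf_scale[of lam c ?y] by simp
  hence "c = 1" by (rule square_inj_CHAR_2[OF ch])
  hence "?y' = ?y" using c(2) by simp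
  thus ?thesis by (metis mk6_simps(1,3,5,6))
qed

lemma param_point_inj:
  assumes ch: "CHAR('a::field) = 2"
  shows "inj_on (\<lambda>(u, v, r, s). param_point u v r s)
           {(u, v, r, s). u * v \<noteq> 0 \<and> (r, s) \<in> conic (lam::'a)}"
proof (rule inj_onI)
  fix a b
  assume "a \<in> {(u, v, r, s). u * v \<noteq> 0 \<and> (r, s) \<in> conic lam}"
    "b \<in> {(u, v, r, s). u * v \<noteq> 0 \<and> (r, s) \<in> conic lam}"
    "(\<lambda>(u, v, r, s). param_point u v r s) a = (\<lambda>(u, v, r, s). param_point u v r s) b"
  thus "a = b"
    by (cases a rule: prod_cases4, cases b rule: prod_cases4)
      (clarsimp, rule param_point_eqD[OF ch], simp_all)
qed

lemma card_parameters:
  fixes lam :: "'a::{field,finite}"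
  assumes card: "card (UNIV :: 'a set) = 2 ^ n" and tr: "abs_trace n lam = 1"
  shows "card {(u, v, r, s). u * v \<noteq> (0::'a) \<and> (r, s) \<in> conic lam}
           = (card (UNIV :: 'a set) - 1) ^ 2 * (card (UNIV :: 'a set) + 1)"
proof -
  have "{(u, v, r, s). u * v \<noteq> (0::'a) \<and> (r, s) \<in> conic lam}
      = (UNIV - {0}) \<times> (UNIV - {0}) \<times> conic lam"
    by auto
  thus ?thesis
    by (simp only: card_cartesian_product card_Diff_singleton finite card_conic[OF card tr]
        power2_eq_square mult.assoc) simp
qed


lemma I_set_std_quadrangle:
  fixes lam :: "'a::{field,finite}"
  assumes ch: "CHAR('a) = 2"
  shows "I_set lam std_quadrangle
           = (\<lambda>(u, v, r, s). param_point u v r s) ` {(u, v, r, s). u * v \<noteq> 0 \<and> (r, s) \<in> conic lam}"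
proof (intro equalityI subsetI)
  fix p assume "p \<in> I_set lam std_quadrangle"
  then obtain u v r s where "p = param_point u v r s" "u * v \<noteq> 0" "(r, s) \<in> conic lam"
    using I_set_std_quadrangle_subset[OF ch] by blast
  thus "p \<in> (\<lambda>(u, v, r, s). param_point u v r s) ` {(u, v, r, s). u * v \<noteq> 0 \<and> (r, s) \<in> conic lam}"
    by (intro image_eqI[where x = "(u, v, r, s)"]) simp_all
next
  fix p
  assume "p \<in> (\<lambda>(u, v, r, s). param_point u v r s) ` {(u, v, r, s). u * v \<noteq> 0 \<and> (r, s) \<in> conic lam}"
  thus "p \<in> I_set lam std_quadrangle" using param_point_in_I_set[OF ch] by auto
qed


theorem lemma3p6:
  fixes lam :: "'a::{field, finite}" and n :: nat
  assumes "card (UNIV :: 'a set) = 2 ^ n"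
    and "abs_trace n lam = 1"
  shows "I_set lam {proj (mk6 [1,0,0,0,0,0]), proj (mk6 [0,0,1,0,0,0]),
                    proj (mk6 [0,1,0,0,0,0]), proj (mk6 [0,0,0,1,0,0])}
           = {proj (mk6 [u, 1 / u, v, 1 / v, r, s]) | u v r s.
                u * v \<noteq> 0 \<and> r ^ 2 + r * s + lam * s ^ 2 = 1}
       \<and> card (I_set lam {proj (mk6 [1,0,0,0,0,0]), proj (mk6 [0,0,1,0,0,0]),
                    proj (mk6 [0,1,0,0,0,0]), proj (mk6 [0,0,0,1,0,0])})
           = (card (UNIV :: 'a set) - 1) ^ 2 * (card (UNIV :: 'a set) + 1)"
proof -
  have ch: "CHAR('a) = 2" by (rule CHAR_eq_2_if_card_power_2[OF assms(1)])
  have "I_set lam std_quadrangle = {proj (mk6 [u, 1 / u, v, 1 / v, r, s]) | u v r s.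
                u * v \<noteq> 0 \<and> r ^ 2 + r * s + lam * s ^ 2 = 1}"
    unfolding I_set_std_quadrangle[OF ch] param_point_def conic_def by (auto simp: image_iff)
  moreover have "card (I_set lam std_quadrangle)
      = (card (UNIV :: 'a set) - 1) ^ 2 * (card (UNIV :: 'a set) + 1)"
    unfolding I_set_std_quadrangle[OF ch] card_image[OF param_point_inj[OF ch]]
    by (rule card_parameters[OF assms])
  ultimately show ?thesis unfolding std_quadrangle_def by (rule conjI)
qed

end
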